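(* Let $\mathcal{D}\subset\mathbb{R}^d$, let $k$ be a positive definite kernel on $\mathcal{D}\times\mathcal{D}$, and let $\epsilon\ge 0$. Let $f^*:\mathcal{D}\to\mathbb{R}$ and let $\tilde f:\mathcal{D}\to\mathbb{R}$ satisfy $|\tilde f(x)-f^*(x)|\le\epsilon$ for all $x\in\mathcal{D}$; write $m(x)=f^*(x)-\tilde f(x)$, so $m:\mathcal{D}\to[-\epsilon,\epsilon]$. Let $x_1,\dots,x_t\in\mathcal{D}$ ($t\ge1$) be any points and $\eta_1,\dots,\eta_t$ any real noise values; set $y^*_i=f^*(x_i)+\eta_i$ and $y_i=y^*_i-m(x_i)=\tilde f(x_i)+\eta_i$. For $\lambda>0$ define $$\mu_t(x)=k_t(x)^T(K_t+\lambda I_t)^{-1}Y_t,\qquad \mu^*_t(x)=k_t(x)^T(K_t+\lambda I_t)^{-1}Y^*_t,$$ $$\sigma_t^2(x)=k(x,x)-k_t(x)^T(K_t+\lambda I_t)^{-1}k_t(x),$$ where $k_t(x)=[k(x_1,x),\dots,k(x_t,x)]^T$, $K_t=[k(x_s,x_{s'})]_{s,s'\le t}$, $Y_t=[y_1,\dots,y_t]^T$, $Y^*_t=[y^*_1,\dots,y^*_t]^T$. Then for every $x\in\mathcal{D}$, $$|\mu_t(x)-\mu^*_t(x)|\le \frac{\epsilon\sqrt{t}}{\sqrt{\lambda}}\,\sigma_t(x).$$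
   Context: $\mu_t,\sigma_t^2$ are the Gaussian-process posterior mean and variance (kernel ridge regression estimates) with regularization/noise parameter $\lambda$; $\mu^*_t$ is the same mean estimator computed from observations of $f^*$ rather than of $\tilde f$. *)

theory Defs
  imports "HOL-Analysis.Analysis"
begin

definition pd_kernel :: "'a set \<Rightarrow> ('a \<Rightarrow> 'a \<Rightarrow> real) \<Rightarrow> bool" where
  "pd_kernel D k \<longleftrightarrow>
     (\<forall>x\<in>D. \<forall>y\<in>D. k x y = k y x) \<and>
     (\<forall>(n::nat) (xs::nat \<Rightarrow> 'a) (c::nat \<Rightarrow> real). (\<forall>i<n. xs i \<in> D) \<longrightarrow>
        0 \<le> (\<Sum>i<n. \<Sum>j<n. c i * c j * k (xs i) (xs j)))"

text \<open>Kernel vector k_t(x), Gram matrix K_t, indexed by the finite type 't of observations.\<close>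
definition kvec :: "('a \<Rightarrow> 'a \<Rightarrow> real) \<Rightarrow> ('t::finite \<Rightarrow> 'a) \<Rightarrow> 'a \<Rightarrow> real^'t" where
  "kvec k X x = (\<chi> s. k (X s) x)"

definition gram :: "('a \<Rightarrow> 'a \<Rightarrow> real) \<Rightarrow> ('t::finite \<Rightarrow> 'a) \<Rightarrow> real^'t^'t" where
  "gram k X = (\<chi> s s'. k (X s) (X s'))"

definition gp_mean :: "('a \<Rightarrow> 'a \<Rightarrow> real) \<Rightarrow> ('t::finite \<Rightarrow> 'a) \<Rightarrow> real \<Rightarrow> real^'t \<Rightarrow> 'a \<Rightarrow> real" where
  "gp_mean k X lam Y x = kvec k X x \<bullet> (matrix_inv (gram k X + mat lam) *v Y)"

definition gp_var :: "('a \<Rightarrow> 'a \<Rightarrow> real) \<Rightarrow> ('t::finite \<Rightarrow> 'a) \<Rightarrow> real \<Rightarrow> 'a \<Rightarrow> real" where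
  "gp_var k X lam x = k x x - kvec k X x \<bullet> (matrix_inv (gram k X + mat lam) *v kvec k X x)"

end

theory Submission
  imports Defs
begin

(* The posterior mean is linear in the data, so the difference of the two means is the posterior
   mean of the misspecification vector m = (ftilde(x_s) - fstar(x_s))_s, and by symmetry of
   K_t + lam I it equals w . m with weights w = (K_t + lam I)^-1 k_t(x). Cauchy-Schwarz and
   |m_s| <= eps give |w . m| <= eps sqrt t |w|. Positive definiteness of k at the t + 1 points
   x_1, ..., x_t, x with coefficients (-w, 1) gives
     0 <= k(x,x) - 2 k_t(x) . w + w . K_t w = sigma_t^2(x) - lam |w|^2,
   that is |w| <= sigma_t(x) / sqrt lam. *)

lemma sum_UNIV_option:
  fixes g :: "'t::finite option \<Rightarrow> 'b::comm_monoid_add"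
  shows "(\<Sum>u\<in>UNIV. g u) = g None + (\<Sum>s\<in>UNIV. g (Some s))"
  by (simp add: UNIV_option_conv sum.reindex)

lemma matrix_vector_mult_mat: "(mat c :: real^'n^'n) *v z = c *\<^sub>R z"
proof -
  have "(if i = j then c else 0) * z$j = (if i = j then c * z$j else 0)" for i j :: 'n
    by simp
  then show ?thesis by (simp add: vec_eq_iff matrix_vector_mult_def mat_def)
qed

lemma transpose_add: "transpose (A + B) = transpose A + transpose B"
  by (simp add: transpose_def vec_eq_iff)

lemma inner_matrix_vector_mult_transpose:
  fixes A :: "real^'n^'m"
  shows "(A *v v) \<bullet> w = v \<bullet> (transpose A *v w)"
  by (metis dot_lmul_matrix vector_transpose_matrix)

lemma norm_le_sqrt_card:
  fixes z :: "real^'n"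
  assumes "\<And>i. \<bar>z$i\<bar> \<le> e"
  shows "norm z \<le> e * sqrt CARD('n)"
proof -
  have "infnorm z \<le> e" unfolding infnorm_cart using assms by (auto intro: cSup_least)
  then show ?thesis using norm_le_infnorm[of z]
    by (simp add: mult.commute order_trans mult_left_mono)
qed

lemma matrix_inv_right: "invertible A \<Longrightarrow> A ** matrix_inv A = mat 1"
  unfolding invertible_def matrix_inv_def by (metis (mono_tags, lifting) someI)

lemma invertible_psd_plus_mat:
  fixes A :: "real^'n^'n"
  assumes psd: "\<And>z. 0 \<le> z \<bullet> (A *v z)" and "c > 0"
  shows "invertible (A + mat c)"
  unfolding invertible_left_inverse matrix_left_invertible_ker
proof (intro allI impI)
  fix z assume "(A + mat c) *v z = 0"
  then have "0 = z \<bullet> ((A + mat c) *v z)" by simp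
  also have "\<dots> = z \<bullet> (A *v z) + c * (z \<bullet> z)"
    by (simp add: matrix_vector_mult_add_rdistrib matrix_vector_mult_mat inner_add_right)
  finally have "0 = z \<bullet> (A *v z) + c * (z \<bullet> z)" .
  then have "z \<bullet> z = 0"
    using psd[of z] \<open>c > 0\<close> by (smt (verit) inner_ge_zero mult_pos_pos)
  then show "z = 0" by simp
qed

lemma pd_kernel_sym: "pd_kernel D k \<Longrightarrow> x \<in> D \<Longrightarrow> y \<in> D \<Longrightarrow> k x y = k y x"
  unfolding pd_kernel_def by blast

lemma pd_kernelD:
  fixes n :: nat
  assumes "pd_kernel D k" and "\<And>i. i < n \<Longrightarrow> xs i \<in> D"
  shows "0 \<le> (\<Sum>i<n. \<Sum>j<n. c i * c j * k (xs i) (xs j))"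
  using assms unfolding pd_kernel_def by blast

lemma pd_kernel_quadratic_form_nonneg:
  fixes X :: "'t::finite \<Rightarrow> 'a"
  assumes pd: "pd_kernel D k" and XD: "\<forall>s. X s \<in> D"
  shows "0 \<le> (\<Sum>s\<in>UNIV. \<Sum>s'\<in>UNIV. c s * c s' * k (X s) (X s'))"
proof -
  obtain h where h: "bij_betw h {..<CARD('t)} (UNIV :: 't set)"
    using ex_bij_betw_nat_finite[of "UNIV :: 't set"] by (auto simp: atLeast0LessThan)
  have reindex: "(\<Sum>i<CARD('t). g (h i)) = (\<Sum>s\<in>UNIV. g s)" for g :: "'t \<Rightarrow> real"
    using sum.reindex_bij_betw[OF h] .
  have "0 \<le> (\<Sum>i<CARD('t). \<Sum>j<CARD('t). c (h i) * c (h j) * k (X (h i)) (X (h j)))"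
    using XD by (intro pd_kernelD[OF pd]) simp
  also have "\<dots> = (\<Sum>s\<in>UNIV. \<Sum>s'\<in>UNIV. c s * c s' * k (X s) (X s'))"
    by (simp add: reindex[of "\<lambda>s'. c _ * c s' * k (X _) (X s')"]
        reindex[of "\<lambda>s. \<Sum>s'\<in>UNIV. c s * c s' * k (X s) (X s')"])
  finally show ?thesis .
qed

lemma inner_gram_nonneg:
  fixes X :: "'t::finite \<Rightarrow> 'a"
  assumes "pd_kernel D k" and "\<forall>s. X s \<in> D"
  shows "0 \<le> z \<bullet> (gram k X *v z)"
  using pd_kernel_quadratic_form_nonneg[OF assms, of "($) z"]
  by (simp add: inner_vec_def matrix_vector_mult_def gram_def sum_distrib_left mult_ac)

lemma transpose_gram:
  fixes X :: "'t::finite \<Rightarrow> 'a"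
  assumes "pd_kernel D k" and "\<forall>s. X s \<in> D"
  shows "transpose (gram k X) = gram k X"
  using pd_kernel_sym[OF assms(1)] assms(2) by (simp add: transpose_def gram_def vec_eq_iff)

lemma pd_kernel_residual_nonneg:
  fixes X :: "'t::finite \<Rightarrow> 'a"
  assumes pd: "pd_kernel D k" and XD: "\<forall>s. X s \<in> D" and xD: "x \<in> D"
  shows "0 \<le> k x x - 2 * (kvec k X x \<bullet> v) + v \<bullet> (gram k X *v v)"
proof -
  define Y where "Y = case_option x X"
  define c where "c = case_option 1 (\<lambda>s. - v$s)"
  have "\<forall>u. Y u \<in> D" using XD xD by (simp add: Y_def split: option.split)
  then have "0 \<le> (\<Sum>u\<in>UNIV. \<Sum>u'\<in>UNIV. c u * c u' * k (Y u) (Y u'))"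
    by (rule pd_kernel_quadratic_form_nonneg[OF pd])
  also have "\<dots> = k x x - 2 * (kvec k X x \<bullet> v) + v \<bullet> (gram k X *v v)"
    using pd_kernel_sym[OF pd] XD xD
    by (simp add: sum_UNIV_option Y_def c_def inner_vec_def kvec_def gram_def
        matrix_vector_mult_def sum.distrib sum_negf sum_subtractf sum_distrib_left mult_ac)
  finally show ?thesis .
qed

definition gp_weights :: "('a \<Rightarrow> 'a \<Rightarrow> real) \<Rightarrow> ('t::finite \<Rightarrow> 'a) \<Rightarrow> real \<Rightarrow> 'a \<Rightarrow> real^'t" where
  "gp_weights k X lam x = matrix_inv (gram k X + mat lam) *v kvec k X x"

lemma gp_mean_diff:
  "gp_mean k X lam Y x - gp_mean k X lam Y' x = gp_mean k X lam (Y - Y') x"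
  by (simp add: gp_mean_def matrix_vector_mult_diff_distrib inner_diff_right)

context
  fixes D :: "'a set" and k :: "'a \<Rightarrow> 'a \<Rightarrow> real" and X :: "'t::finite \<Rightarrow> 'a" and lam :: real
  assumes pd: "pd_kernel D k" and XD: "\<forall>s. X s \<in> D" and lam_pos: "lam > 0"
begin

lemma invertible_gram_plus_mat: "invertible (gram k X + mat lam)"
  using inner_gram_nonneg[OF pd XD] lam_pos by (rule invertible_psd_plus_mat)

lemma gram_plus_mat_gp_weights: "(gram k X + mat lam) *v gp_weights k X lam x = kvec k X x"
  using invertible_gram_plus_mat
  by (simp add: gp_weights_def matrix_vector_mul_assoc matrix_inv_right)

lemma gp_mean_eq_inner_gp_weights: "gp_mean k X lam Y x = gp_weights k X lam x \<bullet> Y"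
proof -
  let ?A = "gram k X + mat lam"
  have "gp_mean k X lam Y x = (?A *v gp_weights k X lam x) \<bullet> (matrix_inv ?A *v Y)"
    by (simp add: gp_mean_def gram_plus_mat_gp_weights)
  also have "\<dots> = gp_weights k X lam x \<bullet> (?A *v (matrix_inv ?A *v Y))"
    using transpose_gram[OF pd XD] by (simp add: inner_matrix_vector_mult_transpose transpose_add)
  also have "\<dots> = gp_weights k X lam x \<bullet> Y"
    using invertible_gram_plus_mat by (simp add: matrix_vector_mul_assoc matrix_inv_right)
  finally show ?thesis .
qed

lemma gp_var_ge_norm_gp_weights:
  assumes "x \<in> D"
  shows "lam * (norm (gp_weights k X lam x))\<^sup>2 \<le> gp_var k X lam x"
proof -
  define w where "w = gp_weights k X lam x"
  have "gram k X *v w = kvec k X x - lam *\<^sub>R w"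
    using gram_plus_mat_gp_weights[of x]
    by (simp add: w_def matrix_vector_mult_add_rdistrib matrix_vector_mult_mat eq_diff_eq)
  then have "w \<bullet> (gram k X *v w) = kvec k X x \<bullet> w - lam * (norm w)\<^sup>2"
    by (simp add: inner_diff_right inner_commute power2_norm_eq_inner)
  moreover have "gp_var k X lam x = k x x - kvec k X x \<bullet> w"
    by (simp add: gp_var_def gp_weights_def w_def)
  ultimately show ?thesis
    using pd_kernel_residual_nonneg[OF pd XD assms, of w] by (simp add: w_def)
qed

lemma gp_var_nonneg: "x \<in> D \<Longrightarrow> 0 \<le> gp_var k X lam x"
  using gp_var_ge_norm_gp_weights lam_pos by (smt (verit) mult_nonneg_nonneg zero_le_power2)

lemma abs_gp_mean_le:
  assumes "x \<in> D"
  shows "\<bar>gp_mean k X lam Y x\<bar> \<le> norm Y * (sqrt (gp_var k X lam x) / sqrt lam)"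
proof -
  define w where "w = gp_weights k X lam x"
  have "sqrt lam * norm w = sqrt (lam * (norm w)\<^sup>2)"
    by (simp add: real_sqrt_mult)
  also have "\<dots> \<le> sqrt (gp_var k X lam x)"
    using gp_var_ge_norm_gp_weights[OF assms] by (simp add: w_def)
  finally have "norm w \<le> sqrt (gp_var k X lam x) / sqrt lam"
    using lam_pos by (simp add: le_divide_eq mult.commute)
  then have "\<bar>w \<bullet> Y\<bar> \<le> norm Y * (sqrt (gp_var k X lam x) / sqrt lam)"
    by (metis Cauchy_Schwarz_ineq2 mult.commute mult_left_mono norm_ge_zero order_trans)
  then show ?thesis by (simp add: w_def gp_mean_eq_inner_gp_weights)
qed

end

theorem lemma2:
  fixes D :: "(real^'d) set"
    and k :: "real^'d \<Rightarrow> real^'d \<Rightarrow> real"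
    and fstar ftilde :: "real^'d \<Rightarrow> real"
    and X :: "'t::finite \<Rightarrow> real^'d"
    and eta :: "'t \<Rightarrow> real"
    and eps lam :: real
    and x :: "real^'d"
  assumes "pd_kernel D k"
    and "eps \<ge> 0"
    and "\<forall>z\<in>D. \<bar>ftilde z - fstar z\<bar> \<le> eps"
    and "\<forall>s. X s \<in> D"
    and "lam > 0"
    and "x \<in> D"
  shows "\<bar>gp_mean k X lam (\<chi> s. ftilde (X s) + eta s) x
           - gp_mean k X lam (\<chi> s. fstar (X s) + eta s) x\<bar>
         \<le> eps * sqrt (real CARD('t)) / sqrt lam * sqrt (gp_var k X lam x)"
proof -
  let ?m = "\<chi> s. ftilde (X s) - fstar (X s)"
  have "(\<chi> s. ftilde (X s) + eta s) - (\<chi> s. fstar (X s) + eta s) = ?m"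
    by (simp add: vec_eq_iff)
  then have "\<bar>gp_mean k X lam (\<chi> s. ftilde (X s) + eta s) x
           - gp_mean k X lam (\<chi> s. fstar (X s) + eta s) x\<bar> = \<bar>gp_mean k X lam ?m x\<bar>"
    by (simp add: gp_mean_diff)
  also have "\<dots> \<le> norm ?m * (sqrt (gp_var k X lam x) / sqrt lam)"
    using assms(1,4,5,6) by (rule abs_gp_mean_le)
  also have "\<dots> \<le> eps * sqrt (real CARD('t)) * (sqrt (gp_var k X lam x) / sqrt lam)"
    using assms(3-5) gp_var_nonneg[OF assms(1,4,5,6)]
    by (intro mult_right_mono norm_le_sqrt_card) simp_all
  finally show ?thesis by simp
qed

end
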